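(* Let $T\in\mathcal{C}_{P,t}$. If $F_T(x)$ is not the Laurent expansion at $x=\infty$ of a rational function, then, viewed as a power series in $w=x^{-1}$, $F_T$ has radius of convergence $0$.
   Context: $P\in\mathbb{C}[x]$ is a nonconstant monic polynomial, $t\in\mathbb{C}\setminus\{0\}$. $\mathcal{A}_P$ denotes the associative unital $\mathbb{C}$-algebra generated by $u,v,z$ subject to $zu-uz=u$, $zv-vz=-v$, $uv=P(z-\tfrac12)$, $vu=P(z+\tfrac12)$; $g_t$ is the automorphism with $g_t(u)=t^{-1}u$, $g_t(v)=tv$, $g_t(z)=z$; $\mathcal{C}_{P,t}$ is the space of linear $T:\mathcal{A}_P\to\mathbb{C}$ with $T(ab)=T(g_t(b)a)$ for all $a,b$. The formal Stieltjes transform of $T$ is $F_T(x)=\sum_{n\ge0}T(z^n)x^{-n-1}$. *)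

theory Defs
  imports "HOL-Analysis.Analysis" "HOL-Library.Poly_Mapping"
    "HOL-Computational_Algebra.Polynomial" "HOL-Computational_Algebra.Formal_Laurent_Series"
begin

instantiation list :: (type) monoid_add
begin
definition zero_list_def: "(0 :: 'a list) = []"
definition plus_list_def: "(xs :: 'a list) + ys = xs @ ys"
instance by standard (auto simp: zero_list_def plus_list_def)
end

datatype gen = U | V | Z

text \<open>The free associative unital C-algebra on u, v, z: finitely supported
  functions from words to complex coefficients, with convolution product.\<close>
type_synonym fa = "gen list \<Rightarrow>\<^sub>0 complex"

definition gU :: fa where "gU = Poly_Mapping.single [U] 1"
definition gV :: fa where "gV = Poly_Mapping.single [V] 1"
definition gZ :: fa where "gZ = Poly_Mapping.single [Z] 1"

definition scal :: "complex \<Rightarrow> fa \<Rightarrow> fa" where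
  "scal c p = Poly_Mapping.single [] c * p"

definition poly_z :: "complex poly \<Rightarrow> fa" where
  "poly_z q = (\<Sum>i\<le>Polynomial.degree q. scal (coeff q i) (gZ ^ i))"

text \<open>Defining relations of A_P (each is set to 0 in A_P).\<close>
definition rels :: "complex poly \<Rightarrow> fa set" where
  "rels P = { gZ * gU - gU * gZ - gU,
              gZ * gV - gV * gZ + gV,
              gU * gV - poly_z (pcompose P [:-1/2, 1:]),
              gV * gU - poly_z (pcompose P [:1/2, 1:]) }"

text \<open>Linear functionals on A_P = linear functionals on the free algebra
  vanishing on the two-sided ideal generated by the relations.\<close>
definition AP_functional :: "complex poly \<Rightarrow> (fa \<Rightarrow> complex) \<Rightarrow> bool" where
  "AP_functional P T \<longleftrightarrow>
     (\<forall>a b. T (a + b) = T a + T b) \<and>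
     (\<forall>c a. T (scal c a) = c * T a) \<and>
     (\<forall>a b r. r \<in> rels P \<longrightarrow> T (a * r * b) = 0)"

definition cnt :: "gen \<Rightarrow> gen list \<Rightarrow> int" where
  "cnt g w = int (length (filter (\<lambda>x. x = g) w))"

text \<open>Lift of the automorphism g_t (u \<mapsto> t^-1 u, v \<mapsto> t v, z \<mapsto> z) to the free algebra.\<close>
definition g_aut :: "complex \<Rightarrow> fa \<Rightarrow> fa" where
  "g_aut t p = (\<Sum>w\<in>Poly_Mapping.keys p.
       Poly_Mapping.single w (t powi (cnt V w - cnt U w) * Poly_Mapping.lookup p w))"

definition twisted_traces :: "complex poly \<Rightarrow> complex \<Rightarrow> (fa \<Rightarrow> complex) set" where
  "twisted_traces P t = {T. AP_functional P T \<and> (\<forall>a b. T (a * b) = T (g_aut t b * a))}"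

text \<open>Formal Stieltjes transform F_T(x) = sum T(z^n) x^(-n-1), as a formal
  Laurent series in the variable x (only negative powers of x occur).
  We use fls in the variable w = x^-1, so x corresponds to fls_X_inv.\<close>
definition stieltjes_fps :: "(fa \<Rightarrow> complex) \<Rightarrow> complex fps" where
  "stieltjes_fps T = Abs_fps (\<lambda>k. if k = 0 then 0 else T (gZ ^ (k - 1)))"

definition stieltjes :: "(fa \<Rightarrow> complex) \<Rightarrow> complex fls" where
  "stieltjes T = fps_to_fls (stieltjes_fps T)"

definition poly_at_inf :: "complex poly \<Rightarrow> complex fls" where
  "poly_at_inf p = (\<Sum>i\<le>Polynomial.degree p. fls_const (coeff p i) * fls_X_inv ^ i)"

definition is_rational_expansion_at_inf :: "complex fls \<Rightarrow> bool" where
  "is_rational_expansion_at_inf F \<longleftrightarrow>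
     (\<exists>p q. q \<noteq> 0 \<and> F = poly_at_inf p / poly_at_inf q)"

end

theory Submission imports Defs "HOL-Complex_Analysis.Complex_Analysis" begin

text \<open>
  The relations of \<open>A\<^sub>P\<close> and the twisted trace property give
  \<open>T(R(z-1) P(z-1/2)) = t T(P(z+1/2) R(z))\<close> for every polynomial \<open>R\<close>.
  In terms of \<open>F = F\<^sub>T\<close> this says that all coefficients of \<open>x\<^sup>-\<^sup>1, x\<^sup>-\<^sup>2, \<dots>\<close> in
  \<open>P(x) (F(x+1/2) - t F(x-1/2))\<close> vanish, i.e. this series is a polynomial \<open>Q(x)\<close>.
  If \<open>F\<close> converges near \<open>x = \<infinity>\<close>, the equation \<open>P(x) (F(x+1/2) - t F(x-1/2)) = Q(x)\<close>
  holds analytically; iterating it expresses \<open>D(x) F(x)\<close> for a polynomial \<open>D \<noteq> 0\<close>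
  through values of \<open>F\<close> far to the right, which continues \<open>D F\<close> to an entire
  function. That function grows polynomially, hence is a polynomial, and \<open>F\<close> is rational.
\<close>

abbreviation fa_const :: "complex \<Rightarrow> fa" where
  "fa_const a \<equiv> Poly_Mapping.single [] a"

lemma zero_list_eq_Nil: "(0::'a list) = []"
  by (simp add: zero_list_def)

lemma plus_list_eq_append: "(xs::'a list) + ys = xs @ ys"
  by (simp add: plus_list_def)

lemma lookup_fa_const_mult: "Poly_Mapping.lookup (fa_const a * x) k = a * Poly_Mapping.lookup x k"
  by (simp add: lookup_mult lookup_single plus_list_eq_append when_mult mult_when
      Sum_any_right_distrib flip: Sum_any_left_distrib)

lemma lookup_mult_fa_const: "Poly_Mapping.lookup (x * fa_const a) k = a * Poly_Mapping.lookup x k"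
proof -
  have "(\<Sum>ab. (c when [] = ab) when k = aa @ ab) = (c when k = aa)" for c :: complex and aa
    by (subst when_commute) simp
  then show ?thesis
    by (simp add: lookup_mult lookup_single plus_list_eq_append when_mult mult_when
        Sum_any_right_distrib mult.commute)
qed

lemma fa_const_mult_commute: "fa_const a * x = x * fa_const a"
  by (rule poly_mapping_eqI) (simp add: lookup_fa_const_mult lookup_mult_fa_const)

lemma fa_const_1: "fa_const 1 = 1"
  using single_one[where 'a="gen list" and 'b=complex] by (simp add: zero_list_eq_Nil)

lemma fa_const_add: "fa_const (a + b) = fa_const a + fa_const b"
  by (simp add: single_add)

lemma fa_const_mult: "fa_const (a * b) = fa_const a * fa_const b"
  by (simp add: mult_single plus_list_eq_append)

lemma fa_const_uminus: "fa_const (- a) = - fa_const a"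
  by (simp add: single_uminus)

lemma scal_eq_fa_const_mult: "scal c p = fa_const c * p"
  by (simp add: scal_def)

lemma poly_z_eq_sum_atMost:
  assumes "degree q \<le> N"
  shows "poly_z q = (\<Sum>i\<le>N. fa_const (coeff q i) * gZ ^ i)"
proof -
  have "(\<Sum>i\<le>N. fa_const (coeff q i) * gZ ^ i) = (\<Sum>i\<le>degree q. fa_const (coeff q i) * gZ ^ i)"
    by (rule sum.mono_neutral_right) (use assms in \<open>auto simp: coeff_eq_0\<close>)
  then show ?thesis
    by (simp add: poly_z_def scal_eq_fa_const_mult)
qed

lemma poly_z_0: "poly_z 0 = 0"
  by (simp add: poly_z_def scal_eq_fa_const_mult)

lemma poly_z_add: "poly_z (p + q) = poly_z p + poly_z q"
proof -
  let ?N = "max (degree p) (degree q)"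
  have "degree (p + q) \<le> ?N"
    by (simp add: degree_add_le)
  then show ?thesis
    by (simp add: poly_z_eq_sum_atMost[of _ ?N] fa_const_add distrib_right sum.distrib)
qed

lemma poly_z_smult: "poly_z (smult a p) = fa_const a * poly_z p"
  by (simp add: poly_z_eq_sum_atMost[of _ "degree p"] fa_const_mult sum_distrib_left mult.assoc)

lemma poly_z_pCons: "poly_z (pCons a q) = fa_const a + gZ * poly_z q"
proof -
  have "poly_z (pCons a q) = (\<Sum>i\<le>Suc (degree q). fa_const (coeff (pCons a q) i) * gZ ^ i)"
    by (rule poly_z_eq_sum_atMost) (simp add: degree_pCons_le)
  also have "\<dots> = fa_const a + (\<Sum>i\<le>degree q. fa_const (coeff q i) * gZ ^ Suc i)"
    by (subst sum.atMost_Suc_shift) simp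
  also have "(\<Sum>i\<le>degree q. fa_const (coeff q i) * gZ ^ Suc i) = gZ * poly_z q"
    unfolding poly_z_eq_sum_atMost[of q "degree q", OF order_refl] sum_distrib_left
    by (rule sum.cong) (simp_all, metis mult.assoc fa_const_mult_commute)
  finally show ?thesis .
qed

lemma poly_z_const: "poly_z [:a:] = fa_const a"
  by (simp add: poly_z_pCons poly_z_0)

lemma poly_z_mult: "poly_z (p * q) = poly_z p * poly_z q"
  by (induction p) (simp_all add: poly_z_0 poly_z_add poly_z_smult poly_z_pCons distrib_right mult.assoc)

lemma poly_z_X_minus_1: "poly_z [:-1, 1:] = gZ - 1"
  by (simp add: poly_z_pCons poly_z_0 fa_const_uminus fa_const_1)

lemma g_aut_gV: "g_aut t gV = fa_const t * gV"
  by (simp add: g_aut_def gV_def cnt_def mult_single plus_list_eq_append)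

locale twisted_trace =
  fixes P :: "complex poly" and t :: complex and T :: "fa \<Rightarrow> complex"
  assumes twisted_trace: "T \<in> twisted_traces P t"
begin

lemma T_add: "T (a + b) = T a + T b"
  using twisted_trace by (simp add: twisted_traces_def AP_functional_def)

lemma T_fa_const_mult: "T (fa_const c * a) = c * T a"
  using twisted_trace by (simp add: twisted_traces_def AP_functional_def scal_eq_fa_const_mult)

lemma T_rels: "r \<in> rels P \<Longrightarrow> T (x * r * y) = 0"
  using twisted_trace by (simp add: twisted_traces_def AP_functional_def)

lemma T_twist: "T (a * b) = T (g_aut t b * a)"
  using twisted_trace by (simp add: twisted_traces_def)

lemma T_0: "T 0 = 0"
  using T_add[of 0 0] by simp

lemma T_sum: "T (sum f A) = (\<Sum>i\<in>A. T (f i))"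
  by (induction A rule: infinite_finite_induct) (simp_all add: T_0 T_add)

lemma T_poly_z: "T (poly_z q) = (\<Sum>i\<le>degree q. coeff q i * T (gZ ^ i))"
  unfolding poly_z_def by (simp add: T_sum scal_eq_fa_const_mult T_fa_const_mult)

text \<open>Congruence modulo the largest two-sided ideal on which \<open>T\<close> vanishes.\<close>

definition T_cong :: "fa \<Rightarrow> fa \<Rightarrow> bool" where
  "T_cong a b \<longleftrightarrow> (\<forall>x y. T (x * a * y) = T (x * b * y))"

lemma T_cong_refl: "T_cong a a"
  by (simp add: T_cong_def)

lemma T_cong_sym: "T_cong a b \<Longrightarrow> T_cong b a"
  by (simp add: T_cong_def)

lemma T_cong_trans [trans]: "T_cong a b \<Longrightarrow> T_cong b c \<Longrightarrow> T_cong a c"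
  by (simp add: T_cong_def)

lemma T_cong_mult_left: "T_cong a b \<Longrightarrow> T_cong (p * a) (p * b)"
  unfolding T_cong_def by (metis mult.assoc)

lemma T_cong_mult_right: "T_cong a b \<Longrightarrow> T_cong (a * q) (b * q)"
  unfolding T_cong_def by (metis mult.assoc)

lemma T_cong_add: "T_cong a b \<Longrightarrow> T_cong c d \<Longrightarrow> T_cong (a + c) (b + d)"
  unfolding T_cong_def by (simp add: distrib_left distrib_right T_add)

lemma T_cong_if_diff_in_rels:
  assumes "a - b \<in> rels P"
  shows "T_cong a b"
  unfolding T_cong_def
proof (intro allI)
  fix x y
  have "T (x * a * y) = T (x * (a - b) * y) + T (x * b * y)"
    by (simp add: algebra_simps flip: T_add)
  then show "T (x * a * y) = T (x * b * y)"
    using T_rels[OF assms] by simp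
qed

lemma T_cong_imp_eq: "T_cong a b \<Longrightarrow> T a = T b"
  unfolding T_cong_def by (metis mult_1_left mult_1_right)

lemma T_cong_gU_gZ: "T_cong (gU * gZ) (gZ * gU - gU)"
  by (rule T_cong_sym, rule T_cong_if_diff_in_rels) (simp add: rels_def algebra_simps)

lemma T_cong_gU_poly_z: "T_cong (gU * poly_z R) (poly_z (pcompose R [:-1, 1:]) * gU)"
proof (induction R)
  case 0
  then show ?case
    by (simp add: poly_z_0 T_cong_refl)
next
  case (pCons a R)
  define Y where "Y = poly_z (pcompose R [:-1, 1:])"
  have lhs: "gU * poly_z (pCons a R) = fa_const a * gU + (gU * gZ) * poly_z R"
    by (simp add: poly_z_pCons distrib_left mult.assoc flip: fa_const_mult_commute)
  have rhs: "poly_z (pcompose (pCons a R) [:-1, 1:]) * gU = fa_const a * gU + (gZ - 1) * (Y * gU)"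
    unfolding pcompose_pCons poly_z_add poly_z_const poly_z_mult poly_z_X_minus_1 Y_def
    by (simp only: distrib_right mult.assoc)
  have "T_cong ((gU * gZ) * poly_z R) ((gZ - 1) * (gU * poly_z R))"
    using T_cong_mult_right[OF T_cong_gU_gZ, of "poly_z R"] by (simp add: algebra_simps)
  also have "T_cong \<dots> ((gZ - 1) * (Y * gU))"
    using T_cong_mult_left[OF pCons.IH] Y_def by simp
  finally have "T_cong ((gU * gZ) * poly_z R) ((gZ - 1) * (Y * gU))" .
  then show ?case
    unfolding lhs rhs by (rule T_cong_add[OF T_cong_refl])
qed

lemma T_poly_z_shift_relation:
  "T (poly_z (pcompose R [:-1, 1:] * pcompose P [:-1/2, 1:])) =
   t * T (poly_z (pcompose P [:1/2, 1:] * R))"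
proof -
  define X where "X = poly_z R"
  define Y where "Y = poly_z (pcompose R [:-1, 1:])"
  have "T (poly_z (pcompose R [:-1, 1:] * pcompose P [:-1/2, 1:])) = T (Y * (gU * gV))"
  proof -
    have "T_cong (gU * gV) (poly_z (pcompose P [:-1/2, 1:]))"
      by (rule T_cong_if_diff_in_rels) (simp add: rels_def)
    from T_cong_imp_eq[OF T_cong_mult_left[OF this, of Y]] show ?thesis
      by (simp add: poly_z_mult Y_def)
  qed
  also have "\<dots> = T (gU * X * gV)"
  proof -
    have "T (1 * (gU * X) * gV) = T (1 * (Y * gU) * gV)"
      using T_cong_gU_poly_z[of R] unfolding T_cong_def X_def Y_def by blast
    then show ?thesis
      by (simp add: mult.assoc)
  qed
  also have "\<dots> = T (g_aut t gV * (gU * X))"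
    by (rule T_twist)
  also have "\<dots> = t * T (gV * gU * X)"
    by (simp add: g_aut_gV mult.assoc T_fa_const_mult)
  also have "T (gV * gU * X) = T (poly_z (pcompose P [:1/2, 1:]) * X)"
  proof -
    have "T_cong (gV * gU) (poly_z (pcompose P [:1/2, 1:]))"
      by (rule T_cong_if_diff_in_rels) (simp add: rels_def)
    from T_cong_imp_eq[OF T_cong_mult_right[OF this, of X]] show ?thesis
      by simp
  qed
  finally show ?thesis
    by (simp add: poly_z_mult X_def)
qed

end

definition fls_poly :: "complex poly \<Rightarrow> complex fls \<Rightarrow> complex fls" where
  "fls_poly p Y = poly (map_poly fls_const p) Y"

lemma fls_poly_0 [simp]: "fls_poly 0 Y = 0"
  by (simp add: fls_poly_def)

lemma fls_poly_pCons: "fls_poly (pCons a p) Y = fls_const a + Y * fls_poly p Y"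
  by (simp add: fls_poly_def map_poly_pCons)

lemma fls_poly_const: "fls_poly [:a:] Y = fls_const a"
  by (simp add: fls_poly_pCons)

lemma fls_poly_add: "fls_poly (p + q) Y = fls_poly p Y + fls_poly q Y"
  by (induction p q rule: poly_induct2)
    (simp_all add: fls_poly_pCons algebra_simps fls_plus_const[symmetric])

lemma fls_poly_smult: "fls_poly (smult a p) Y = fls_const a * fls_poly p Y"
  by (simp add: fls_poly_def map_poly_smult)

lemma fls_poly_mult: "fls_poly (p * q) Y = fls_poly p Y * fls_poly q Y"
  by (induction p) (simp_all add: fls_poly_add fls_poly_smult fls_poly_pCons algebra_simps)

lemma fls_poly_pcompose: "fls_poly (pcompose p q) Y = fls_poly p (fls_poly q Y)"
  by (induction p) (simp_all add: pcompose_pCons fls_poly_add fls_poly_mult fls_poly_const fls_poly_pCons)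

lemma fls_poly_power: "fls_poly (p ^ n) Y = fls_poly p Y ^ n"
  by (induction n) (simp_all add: fls_poly_mult, simp add: fls_poly_def)

lemma fls_compose_fps_fls_poly:
  assumes "H \<noteq> 0" "fps_nth H 0 = 0"
  shows "fls_compose_fps (fls_poly p Y) H = fls_poly p (fls_compose_fps Y H)"
  by (induction p) (simp_all add: fls_poly_pCons fls_compose_fps_add fls_compose_fps_mult assms)

lemma fls_compose_fps_sum:
  assumes "H \<noteq> 0" "fps_nth H 0 = 0"
  shows "fls_compose_fps (sum f A) H = (\<Sum>i\<in>A. fls_compose_fps (f i) H)"
  by (induction A rule: infinite_finite_induct) (simp_all add: fls_compose_fps_add assms)

lemma poly_at_inf_eq_fls_poly: "poly_at_inf p = fls_poly p fls_X_inv"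
  unfolding poly_at_inf_def fls_poly_def poly_altdef
  by (simp add: degree_map_poly coeff_map_poly)

lemma fls_nth_poly_at_inf:
  "fls_nth (poly_at_inf q) n = (if n \<le> 0 then coeff q (nat (-n)) else 0)"
proof -
  have "fls_nth (poly_at_inf q) n = (\<Sum>i\<le>degree q. if n = - int i then coeff q i else 0)"
    by (simp add: poly_at_inf_def fls_nth_sum if_distrib cong: if_cong)
  also have "\<dots> = (\<Sum>i\<in>{..degree q} \<inter> {nat (-n)}. if n \<le> 0 then coeff q i else 0)"
    by (rule sum.mono_neutral_cong_right) auto
  also have "\<dots> = (if n \<le> 0 then coeff q (nat (-n)) else 0)"
    by (cases "nat (-n) \<le> degree q") (auto simp: coeff_eq_0)
  finally show ?thesis .
qed

lemma poly_at_inf_eq_0_iff [simp]: "poly_at_inf D = 0 \<longleftrightarrow> D = 0"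
proof
  assume "poly_at_inf D = 0"
  then have "fls_nth (poly_at_inf D) (- int (degree D)) = 0"
    by simp
  then show "D = 0"
    by (simp add: fls_nth_poly_at_inf)
qed (simp add: poly_at_inf_def)

lemma fls_eq_poly_at_inf_if_nth_pos_eq_0:
  assumes "\<And>n. n > 0 \<Longrightarrow> fls_nth H n = 0"
  shows "\<exists>Q. H = poly_at_inf Q"
proof -
  define N where "N = nat (- fls_subdegree H)"
  define Q where "Q = Poly (map (\<lambda>i. fls_nth H (- int i)) [0..<Suc N])"
  have coeff_Q: "coeff Q i = (if i \<le> N then fls_nth H (- int i) else 0)" for i
    by (simp add: Q_def nth_default_def del: upt_Suc)
  have "fls_nth H n = fls_nth (poly_at_inf Q) n" for n
  proof (cases "n \<le> 0")
    case True
    then have "nat (-n) > N \<Longrightarrow> n < fls_subdegree H"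
      by (simp add: N_def)
    with True show ?thesis
      by (auto simp: fls_nth_poly_at_inf coeff_Q)
  next
    case False
    then show ?thesis
      using assms[of n] by (simp add: fls_nth_poly_at_inf)
  qed
  then show ?thesis
    using fls_eqI by blast
qed

text \<open>With \<open>w = x\<^sup>-\<^sup>1\<close>, composing a Laurent series in \<open>w\<close> with \<open>w/(1 + c w)\<close>
  substitutes \<open>x + c\<close> for \<open>x\<close>.\<close>

definition translation_fps :: "complex \<Rightarrow> complex fps" where
  "translation_fps c = fps_X * inverse (1 + fps_const c * fps_X)"

lemma translation_fps_nth_0 [simp]: "fps_nth (translation_fps c) 0 = 0"
  by (simp add: translation_fps_def)

lemma translation_fps_nth_1 [simp]: "fps_nth (translation_fps c) (Suc 0) = 1"
  by (simp add: translation_fps_def)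

lemma translation_fps_nonzero [simp]: "translation_fps c \<noteq> 0"
  using translation_fps_nth_1[of c] by (metis fps_zero_nth zero_neq_one)

lemma subdegree_translation_fps [simp]: "subdegree (translation_fps c) = 1"
  by (rule subdegreeI) auto

lemma translation_fps_has_fps_expansion:
  "(\<lambda>w. w * inverse (1 + c * w)) has_fps_expansion translation_fps c"
  unfolding translation_fps_def by (intro fps_expansion_intros) simp

lemma inverse_fps_to_fls_translation_fps:
  "inverse (fps_to_fls (translation_fps c)) = fls_X_inv + fls_const c"
proof (rule inverse_unique)
  have X_inv: "fls_X * fls_X_inv = (1 :: complex fls)"
    by (simp flip: fls_inverse_X)
  have "inverse (1 + fps_const c * fps_X) * (1 + fps_const c * fps_X) = 1"
    by (rule inverse_mult_eq_1) simp
  then have inv: "fps_to_fls (inverse (1 + fps_const c * fps_X)) * fps_to_fls (1 + fps_const c * fps_X) = 1"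
    by (metis fls_times_fps_to_fls fps_one_to_fls)
  have "fls_X_inv * fps_to_fls (1 + fps_const c * fps_X) = fls_X_inv + fls_const c * (fls_X * fls_X_inv)"
    by (simp add: fls_times_fps_to_fls distrib_left mult.left_commute)
  then have "fls_X_inv + fls_const c = fls_X_inv * fps_to_fls (1 + fps_const c * fps_X)"
    by (simp add: X_inv)
  then have "fps_to_fls (translation_fps c) * (fls_X_inv + fls_const c) =
      (fls_X * fls_X_inv) * (fps_to_fls (inverse (1 + fps_const c * fps_X)) * fps_to_fls (1 + fps_const c * fps_X))"
    by (simp add: translation_fps_def fls_times_fps_to_fls mult_ac)
  then show "fps_to_fls (translation_fps c) * (fls_X_inv + fls_const c) = 1"
    by (simp only: X_inv inv) simp
qed

lemma fls_compose_poly_at_inf_translation_fps: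
  "fls_compose_fps (poly_at_inf p) (translation_fps c) = fls_poly p (fls_X_inv + fls_const c)"
proof -
  have "fls_compose_fps fls_X_inv (translation_fps c) = fls_X_inv + fls_const c"
    by (simp add: fls_compose_fps_inverse inverse_fps_to_fls_translation_fps flip: fls_inverse_X)
  then show ?thesis
    by (simp add: poly_at_inf_eq_fls_poly fls_compose_fps_fls_poly)
qed

lemma fls_nth_1_compose_X_power_translation_fps:
  assumes "j \<le> 1"
  shows "fls_nth (fls_compose_fps (fls_shift (-j) 1) (translation_fps c)) 1 = (if j = 1 then 1 else 0)"
proof (cases "j = 1")
  case True
  then show ?thesis
    by (simp add: fls_compose_fps_shift)
next
  case False
  then have j: "j = - int (nat (-j))"
    using assms by simp
  have "fls_compose_fps (fls_shift (-j) 1) (translation_fps c) = fps_to_fls (translation_fps c) powi j"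
    by (simp add: fls_compose_fps_shift)
  also have "\<dots> = (fls_X_inv + fls_const c) ^ nat (-j)"
    by (subst j) (simp only: power_int_minus power_int_of_nat power_inverse[symmetric]
        inverse_fps_to_fls_translation_fps)
  also have "\<dots> = poly_at_inf ([:c, 1:] ^ nat (-j))"
    by (simp add: poly_at_inf_eq_fls_poly fls_poly_power fls_poly_pCons fls_poly_const add.commute)
  finally show ?thesis
    using False by (simp add: fls_nth_poly_at_inf)
qed


text \<open>The coefficient of \<open>x\<^sup>-\<^sup>1\<close> (the residue at infinity) is invariant under
  translation: only the finitely many terms \<open>x\<^sup>k\<close>, \<open>k \<ge> -1\<close>, can contribute to it.\<close>

lemma fls_nth_1_compose_translation_fps:
  "fls_nth (fls_compose_fps H (translation_fps c)) 1 = fls_nth H 1"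
proof -
  define s where "s = fls_subdegree H"
  define Hlow where "Hlow = (\<Sum>j\<in>{s..1}. fls_const (fls_nth H j) * fls_shift (-j) 1)"
  have Hlow_nth: "fls_nth Hlow n = (if s \<le> n \<and> n \<le> 1 then fls_nth H n else 0)" for n
    unfolding Hlow_def fls_nth_sum by (simp add: sum.delta' if_distrib cong: if_cong)
  have "fls_nth (fls_compose_fps (H - Hlow) (translation_fps c)) 1 = 0"
  proof (cases "H - Hlow = 0")
    case False
    have "2 \<le> fls_subdegree (H - Hlow)"
      by (rule fls_subdegree_geI[OF False]) (auto simp: Hlow_nth s_def)
    then show ?thesis
      by simp
  qed simp
  moreover have "fls_compose_fps H (translation_fps c) =
      fls_compose_fps Hlow (translation_fps c) + fls_compose_fps (H - Hlow) (translation_fps c)"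
    by (simp flip: fls_compose_fps_add)
  moreover have "fls_compose_fps Hlow (translation_fps c) =
      (\<Sum>j\<in>{s..1}. fls_const (fls_nth H j) * fls_compose_fps (fls_shift (-j) 1) (translation_fps c))"
    unfolding Hlow_def by (simp add: fls_compose_fps_sum fls_compose_fps_mult)
  ultimately show ?thesis
    by (cases "s \<le> 1")
      (simp_all add: fls_nth_sum fls_nth_1_compose_X_power_translation_fps sum.delta' s_def if_distrib cong: if_cong)
qed

lemma has_laurent_expansion_poly_inverse:
  "(\<lambda>w. poly p (inverse w)) has_laurent_expansion poly_at_inf p"
  unfolding poly_altdef poly_at_inf_def by (intro laurent_expansion_intros)

lemma eventually_eq_poly_inverse_if_has_laurent_expansion:
  assumes "h has_laurent_expansion poly_at_inf Q"
  shows "eventually (\<lambda>w. h w = poly Q (inverse w)) (at 0)"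
proof -
  have "eventually (\<lambda>w. eval_fls (poly_at_inf Q) w = h w) (at 0)"
      "eventually (\<lambda>w. eval_fls (poly_at_inf Q) w = poly Q (inverse w)) (at 0)"
    using assms has_laurent_expansion_poly_inverse[of Q] by (simp_all add: has_laurent_expansion_def)
  then show ?thesis
    by eventually_elim simp
qed

lemma eval_fps_translation_equation:
  fixes S :: "complex fps" and c t :: complex
  assumes rad: "fps_conv_radius S > 0"
    and eq: "poly_at_inf P * (fls_compose_fps (fps_to_fls S) (translation_fps c)
      - fls_const t * fls_compose_fps (fps_to_fls S) (translation_fps (-c))) = poly_at_inf Q"
  obtains K where "\<And>x. norm x > K \<Longrightarrow>
    poly P x * (eval_fps S (inverse (x + c)) - t * eval_fps S (inverse (x - c))) = poly Q x"
proof -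
  have S: "eval_fps S has_laurent_expansion fps_to_fls S"
    by (rule has_laurent_expansion_fps[OF eval_fps_has_fps_expansion]) (use rad in simp)
  have translated: "(eval_fps S \<circ> (\<lambda>w. w * inverse (1 + a * w))) has_laurent_expansion
      fls_compose_fps (fps_to_fls S) (translation_fps a)" for a
    by (rule has_laurent_expansion_compose[OF S
          has_laurent_expansion_fps[OF translation_fps_has_fps_expansion]]) simp_all
  define h where "h = (\<lambda>w. poly P (inverse w) *
      ((eval_fps S \<circ> (\<lambda>w. w * inverse (1 + c * w))) w
        - t * (eval_fps S \<circ> (\<lambda>w. w * inverse (1 + (-c) * w))) w))"
  have "h has_laurent_expansion poly_at_inf Q"
    unfolding h_def eq[symmetric]
    by (intro has_laurent_expansion_mult has_laurent_expansion_poly_inverse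
        has_laurent_expansion_diff has_laurent_expansion_cmult_left translated)
  then have "eventually (\<lambda>w. h w = poly Q (inverse w)) (at 0)"
    by (rule eventually_eq_poly_inverse_if_has_laurent_expansion)
  then obtain d where d: "d > 0" "\<And>w. w \<noteq> 0 \<Longrightarrow> dist w 0 < d \<Longrightarrow> h w = poly Q (inverse w)"
    unfolding eventually_at by auto
  show ?thesis
  proof (rule that[of "max (norm c + 1) (1/d)"])
    fix x :: complex
    assume x: "norm x > max (norm c + 1) (1/d)"
    have "norm x - norm c \<le> norm (x + c)" "norm x - norm c \<le> norm (x - c)"
      using norm_triangle_ineq2[of x "-c"] norm_triangle_ineq2[of x c] by simp_all
    then have "0 < norm x" "0 < norm (x + c)" "0 < norm (x - c)"
      using x norm_ge_zero[of c] by linarith+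
    then have nonzero: "x \<noteq> 0" "x + c \<noteq> 0" "x - c \<noteq> 0"
      by auto
    have "1 / norm x < d"
      using x d(1) \<open>0 < norm x\<close> by (simp add: field_simps)
    then have "h (inverse x) = poly Q x"
      using d(2)[of "inverse x"] nonzero by (simp add: norm_inverse divide_inverse)
    moreover have "inverse x * inverse (1 + c * inverse x) = inverse (x + c)"
        "inverse x * inverse (1 + - c * inverse x) = inverse (x - c)"
      using nonzero by (simp_all add: field_simps)
    ultimately show "poly P x * (eval_fps S (inverse (x + c)) - t * eval_fps S (inverse (x - c))) = poly Q x"
      by (simp add: h_def)
  qed
qed

lemma functional_equation_iterate:
  fixes f :: "complex \<Rightarrow> complex" and A B :: "complex poly"
  assumes t: "t \<noteq> 0" and A: "A \<noteq> 0"
    and fe: "\<And>z. norm z > K \<Longrightarrow> poly A z * f z = t * poly A z * f (z - 1) + poly B z"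
  shows "\<exists>D a b. D \<noteq> 0 \<and> (\<forall>y. (\<forall>i\<in>{1..N}. norm (y + of_nat i) > K) \<longrightarrow>
            poly D y * f y = poly a y * f (y + of_nat N) + poly b y)"
proof (induction N)
  case 0
  show ?case
    by (rule exI[of _ 1], rule exI[of _ 1], rule exI[of _ 0]) simp
next
  case (Suc N)
  then obtain D a b where D: "D \<noteq> 0" and
    IH: "\<And>y. (\<forall>i\<in>{1..N}. norm (y + of_nat i) > K) \<Longrightarrow> poly D y * f y = poly a y * f (y + of_nat N) + poly b y"
    by blast
  define A' where "A' = pcompose A [:of_nat (Suc N), 1:]"
  define B' where "B' = pcompose B [:of_nat (Suc N), 1:]"
  have poly_A': "poly A' y = poly A (y + of_nat (Suc N))" for y
    by (simp add: A'_def poly_pcompose add.commute)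
  have poly_B': "poly B' y = poly B (y + of_nat (Suc N))" for y
    by (simp add: B'_def poly_pcompose add.commute)
  show ?case
  proof (intro exI conjI allI impI)
    show "D * A' \<noteq> 0"
      using D A by (simp add: A'_def pcompose_eq_0_iff)
  next
    fix y :: complex
    assume y: "\<forall>i\<in>{1..Suc N}. K < norm (y + of_nat i)"
    define z where "z = y + of_nat (Suc N)"
    have "norm z > K"
      using y[rule_format, of "Suc N"] by (simp add: z_def del: of_nat_Suc)
    moreover have "z - 1 = y + of_nat N"
      by (simp add: z_def)
    ultimately have step: "poly A z * f (y + of_nat N) = (poly A z * f z - poly B z) / t"
      using fe t by (simp add: field_simps)
    have "poly (D * A') y * f y = poly A z * (poly D y * f y)"
      by (simp add: poly_A' z_def)
    also have "\<dots> = poly a y * (poly A z * f (y + of_nat N)) + poly A z * poly b y"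
      using IH y by (simp add: algebra_simps)
    also have "\<dots> = poly (smult (1/t) (a * A')) y * f (y + of_nat (Suc N)) +
                    poly (A' * b - smult (1/t) (a * B')) y"
      unfolding step by (simp add: poly_A' poly_B' z_def algebra_simps diff_divide_distrib)
    finally show "poly (D * A') y * f y = poly (smult (1/t) (a * A')) y * f (y + of_nat (Suc N)) +
                    poly (A' * b - smult (1/t) (a * B')) y" .
  qed
qed

lemma holomorphic_glue_annulus:
  fixes \<Psi> \<Phi> :: "complex \<Rightarrow> complex" and r R :: real
  assumes holo_\<Psi>: "\<Psi> holomorphic_on {y. norm y > r}" and holo_\<Phi>: "\<Phi> holomorphic_on ball 0 R"
    and "r < R" and G: "open G" "y0 \<in> G" "G \<subseteq> {y. r < norm y \<and> norm y < R}"
    and agree_G: "\<And>y. y \<in> G \<Longrightarrow> \<Psi> y = \<Phi> y"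
  obtains E where "E holomorphic_on UNIV" "\<And>y. norm y > r \<Longrightarrow> E y = \<Psi> y"
proof -
  define U where "U = {y::complex. norm y > r}"
  have open_U: "open U"
    unfolding U_def by (simp add: open_Collect_less continuous_on_norm continuous_on_id continuous_on_const)
  have annulus: "{y. r < norm (y - 0) \<and> norm (y - 0) < R} = U \<inter> ball 0 R"
    by (auto simp: U_def)
  have "connected {y::complex. r < norm (y - 0) \<and> norm (y - 0) < R}"
    by (rule connected_annulus) simp
  then have agree: "\<Psi> y = \<Phi> y" if "y \<in> U \<inter> ball 0 R" for y
    using that G agree_G holo_\<Psi> holo_\<Phi> open_U unfolding annulus U_def
    by (intro analytic_continuation_open[of G "U \<inter> ball 0 R" \<Psi> \<Phi> y])
      (auto simp: U_def intro: holomorphic_on_subset)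
  define E where "E = (\<lambda>y. if norm y > r then \<Psi> y else \<Phi> y)"
  have "E holomorphic_on U"
    unfolding U_def by (rule holomorphic_transform[OF holo_\<Psi>]) (simp add: E_def)
  moreover have "E holomorphic_on ball 0 R"
    by (rule holomorphic_transform[OF holo_\<Phi>]) (auto simp: E_def U_def agree)
  ultimately have "E holomorphic_on (U \<union> ball 0 R)"
    by (rule holomorphic_on_Un) (simp_all add: open_U)
  moreover have "U \<union> ball 0 R = UNIV"
    using \<open>r < R\<close> by (auto simp: U_def)
  ultimately show ?thesis
    using that by (simp add: E_def)
qed

text \<open>Iterating the equation \<open>N\<close> times writes \<open>D f\<close> near the positive real axis in terms
  of \<open>f(\<cdot> + N)\<close>, which is holomorphic on the disc of radius \<open>N - K'\<close>; this disc and the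
  domain of \<open>f\<close> cover the plane once \<open>N > 2 K'\<close>.\<close>

lemma functional_equation_entire_multiple:
  fixes f :: "complex \<Rightarrow> complex" and A B :: "complex poly" and K' K :: real
  assumes t: "t \<noteq> 0" and A: "A \<noteq> 0" and K: "0 \<le> K'" "K' \<le> K"
    and holo: "f holomorphic_on {y. norm y > K'}"
    and fe: "\<And>z. norm z > K \<Longrightarrow> poly A z * f z = t * poly A z * f (z - 1) + poly B z"
  obtains D E where "D \<noteq> 0" "E holomorphic_on UNIV" "\<And>y. norm y > K' \<Longrightarrow> E y = poly D y * f y"
proof -
  define N where "N = nat \<lceil>2 * K + 3\<rceil>"
  have N: "real N \<ge> 2 * K + 3"
    unfolding N_def by linarith
  obtain D a b where D: "D \<noteq> 0" and iterated: "\<And>y. (\<forall>i\<in>{1..N}. norm (y + of_nat i) > K) \<Longrightarrow>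
      poly D y * f y = poly a y * f (y + of_nat N) + poly b y"
    using functional_equation_iterate[where N=N, OF t A fe] by blast
  have "(\<lambda>y. y + of_nat N) ` ball (0::complex) (real N - K') \<subseteq> {y. K' < norm y}"
  proof
    fix w :: complex
    assume "w \<in> (\<lambda>y. y + of_nat N) ` ball 0 (real N - K')"
    then obtain y where y: "norm y < real N - K'" "w = y + of_nat N"
      by auto
    have "real N \<le> norm w + norm y"
      using norm_triangle_ineq4[of "y + of_nat N" y] y by (simp add: norm_of_nat)
    then show "w \<in> {y. K' < norm y}"
      using y by simp
  qed
  then have "(f \<circ> (\<lambda>y. y + of_nat N)) holomorphic_on ball 0 (real N - K')"
    by (intro holomorphic_on_compose_gen[OF _ holo] holomorphic_intros)
  then have holo_shifted: "(\<lambda>y. poly a y * f (y + of_nat N) + poly b y) holomorphic_on ball 0 (real N - K')"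
    unfolding o_def by (intro holomorphic_intros)
  define G where "G = {y. K' < norm y \<and> norm y < real N - K'} \<inter> {y. Re y > K}"
  have open_G: "open G"
    unfolding G_def
    by (intro open_Int open_halfspace_Re_gt)
      (simp add: open_Collect_conj open_Collect_less continuous_on_norm continuous_on_id continuous_on_const)
  have y0: "complex_of_real (K + 1) \<in> G"
    using K N by (simp add: G_def)
  have agree: "poly D y * f y = poly a y * f (y + of_nat N) + poly b y" if "y \<in> G" for y
  proof -
    have "K < norm (y + of_nat i)" for i
      using that complex_Re_le_cmod[of "y + of_nat i"] by (simp add: G_def)
    then show ?thesis
      using iterated by blast
  qed
  have holo_multiple: "(\<lambda>y. poly D y * f y) holomorphic_on {y. norm y > K'}"
    by (intro holomorphic_intros holo)
  have "K' < real N - K'"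
    using K N by simp
  moreover have "G \<subseteq> {y. K' < norm y \<and> norm y < real N - K'}"
    by (auto simp: G_def)
  ultimately obtain E where "E holomorphic_on UNIV" "\<And>y. norm y > K' \<Longrightarrow> E y = poly D y * f y"
    using holomorphic_glue_annulus[OF holo_multiple holo_shifted _ open_G y0 _ agree] by blast
  with D show ?thesis
    using that by blast
qed

lemma norm_poly_le_coeff_sum_mult_power:
  fixes p :: "complex poly" and z :: complex
  assumes "norm z \<ge> 1"
  shows "norm (poly p z) \<le> (\<Sum>i\<le>degree p. norm (coeff p i)) * norm z ^ degree p"
proof -
  have "norm (poly p z) \<le> (\<Sum>i\<le>degree p. norm (coeff p i * z ^ i))"
    unfolding poly_altdef by (rule norm_sum)
  also have "\<dots> \<le> (\<Sum>i\<le>degree p. norm (coeff p i) * norm z ^ degree p)"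
  proof (rule sum_mono)
    fix i
    assume "i \<in> {..degree p}"
    then have "norm z ^ i \<le> norm z ^ degree p"
      using assms by (intro power_increasing) auto
    then show "norm (coeff p i * z ^ i) \<le> norm (coeff p i) * norm z ^ degree p"
      by (simp add: norm_mult norm_power mult_left_mono)
  qed
  finally show ?thesis
    by (simp add: sum_distrib_right)
qed

lemma entire_poly_mult_bounded_is_poly:
  fixes E g :: "complex \<Rightarrow> complex" and D :: "complex poly"
  assumes holo: "E holomorphic_on UNIV"
    and eq: "\<And>y. norm y > R \<Longrightarrow> E y = poly D y * g y"
    and bounded: "\<And>y. norm y > R \<Longrightarrow> norm (g y) \<le> M"
  obtains Ep where "\<And>y. E y = poly Ep y"
proof -
  define C where "C = (\<Sum>i\<le>degree D. norm (coeff D i))"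
  have growth: "norm (E z) \<le> (C * max M 0) * norm z ^ degree D" if "max (R + 1) 1 \<le> norm z" for z
  proof -
    have "norm (E z) = norm (poly D z) * norm (g z)"
      using eq that by (simp add: norm_mult)
    also have "\<dots> \<le> (C * norm z ^ degree D) * max M 0"
      using norm_poly_le_coeff_sum_mult_power[of z D] bounded[of z] that
      by (intro mult_mono) (auto simp: C_def sum_nonneg)
    finally show ?thesis
      by (simp add: algebra_simps)
  qed
  have "E y = poly (\<Sum>k\<le>degree D. monom ((deriv ^^ k) E 0 / fact k) k) y" for y
    using Liouville_polynomial[where A="max (R + 1) 1", OF holo growth] by (simp add: poly_sum poly_monom)
  then show ?thesis
    using that by blast
qed

lemma holomorphic_on_eval_fps_inverse:
  fixes S :: "complex fps"
  assumes "r > 0" "ereal r \<le> fps_conv_radius S"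
  shows "(\<lambda>y. eval_fps S (inverse y)) holomorphic_on {y. norm y > 1/r}"
proof -
  have "ball (0::complex) r \<subseteq> eball 0 (fps_conv_radius S)"
  proof
    fix w :: complex
    assume "w \<in> ball 0 r"
    then have "ereal (dist 0 w) < ereal r"
      by simp
    then show "w \<in> eball 0 (fps_conv_radius S)"
      using less_le_trans[OF _ assms(2)] by (simp add: eball_def)
  qed
  then have eval_holo: "eval_fps S holomorphic_on ball 0 r"
    by (rule holomorphic_on_eval_fps)
  have inverse_holo: "inverse holomorphic_on {y::complex. norm y > 1/r}"
    using assms(1) by (intro holomorphic_intros) auto
  have "inverse ` {y::complex. norm y > 1/r} \<subseteq> ball 0 r"
  proof
    fix w
    assume "w \<in> inverse ` {y::complex. norm y > 1/r}"
    then obtain y where y: "norm y > 1/r" "w = inverse y"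
      by auto
    moreover have "1/r > 0"
      using assms(1) by simp
    ultimately have "norm y > 0"
      by linarith
    with y(1) have "1 / norm y < r"
      using assms(1) by (simp add: field_simps)
    then show "w \<in> ball 0 r"
      using y by (simp add: norm_inverse divide_inverse)
  qed
  then have "(eval_fps S \<circ> inverse) holomorphic_on {y. norm y > 1/r}"
    by (rule holomorphic_on_compose_gen[OF inverse_holo eval_holo])
  then show ?thesis
    by (simp add: o_def)
qed

lemma eval_fps_inverse_bounded:
  fixes S :: "complex fps"
  assumes "r > 0" "ereal r < fps_conv_radius S"
  obtains M where "\<And>y. norm y \<ge> 1/r \<Longrightarrow> norm (eval_fps S (inverse y)) \<le> M"
proof -
  have "cball (0::complex) r \<subseteq> eball 0 (fps_conv_radius S)"
  proof
    fix w :: complex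
    assume "w \<in> cball 0 r"
    then have "ereal (dist 0 w) \<le> ereal r"
      by simp
    then show "w \<in> eball 0 (fps_conv_radius S)"
      using le_less_trans[OF _ assms(2)] by (simp add: eball_def)
  qed
  then have "compact (eval_fps S ` cball 0 r)"
    by (intro compact_continuous_image continuous_on_subset[OF continuous_on_eval_fps]) auto
  then obtain M where M: "\<forall>x\<in>eval_fps S ` cball 0 r. norm x \<le> M"
    using compact_imp_bounded bounded_iff by metis
  show ?thesis
  proof (rule that[of M])
    fix y :: complex
    assume y: "norm y \<ge> 1/r"
    moreover have "1/r > 0"
      using assms(1) by simp
    ultimately have "norm y > 0"
      by linarith
    with y have "1 / norm y \<le> r"
      using assms(1) by (simp add: field_simps)
    then show "norm (eval_fps S (inverse y)) \<le> M"
      using M by (simp add: norm_inverse divide_inverse)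
  qed
qed

lemma poly_at_inf_mult_eq_if_eventually:
  assumes "fps_conv_radius S > 0"
    and "eventually (\<lambda>w. poly D (inverse w) * eval_fps S w = poly E (inverse w)) (at 0)"
  shows "poly_at_inf D * fps_to_fls S = poly_at_inf E"
proof -
  have "(\<lambda>w. poly D (inverse w) * eval_fps S w) has_laurent_expansion poly_at_inf D * fps_to_fls S"
    by (intro has_laurent_expansion_mult has_laurent_expansion_poly_inverse has_laurent_expansion_fps
        eval_fps_has_fps_expansion) (use assms(1) in simp)
  then have "(\<lambda>w. poly E (inverse w)) has_laurent_expansion poly_at_inf D * fps_to_fls S"
    using has_laurent_expansion_cong[OF assms(2) refl] by simp
  then show ?thesis
    using has_laurent_expansion_unique has_laurent_expansion_poly_inverse by blast
qed

lemma rational_expansion_if_entire_multiple: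
  fixes S :: "complex fps" and D :: "complex poly"
  assumes r: "r > 0" "ereal r < fps_conv_radius S" and D: "D \<noteq> 0" and E: "E holomorphic_on UNIV"
    and DE: "\<And>y. norm y > 1/r \<Longrightarrow> E y = poly D y * eval_fps S (inverse y)"
  shows "is_rational_expansion_at_inf (fps_to_fls S)"
proof -
  obtain M where "\<And>y. norm y \<ge> 1/r \<Longrightarrow> norm (eval_fps S (inverse y)) \<le> M"
    using eval_fps_inverse_bounded[OF r] by blast
  then obtain Ep where Ep: "\<And>y. E y = poly Ep y"
    using entire_poly_mult_bounded_is_poly[OF E DE] by (metis less_imp_le)
  have "poly D (inverse w) * eval_fps S w = poly Ep (inverse w)" if "w \<noteq> 0" "dist w 0 < r" for w
  proof -
    have "1/r < 1 / norm w"
      using that r(1) by (intro divide_strict_left_mono) auto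
    then have "1/r < norm (inverse w)"
      by (simp add: norm_inverse norm_divide inverse_eq_divide)
    then show ?thesis
      using DE that by (simp add: Ep)
  qed
  then have "eventually (\<lambda>w. poly D (inverse w) * eval_fps S w = poly Ep (inverse w)) (at 0)"
    unfolding eventually_at using r(1) by blast
  then have "poly_at_inf D * fps_to_fls S = poly_at_inf Ep"
    using less_trans[OF _ r(2), of 0] r(1) by (intro poly_at_inf_mult_eq_if_eventually) (simp_all add: zero_ereal_def)
  then show ?thesis
    unfolding is_rational_expansion_at_inf_def using D by (intro exI[of _ Ep] exI[of _ D]) (simp add: field_simps)
qed

lemma pcompose_power_left: "pcompose (p ^ n) r = pcompose p r ^ n"
  for p r :: "'a::comm_semiring_1 poly"
  by (induction n) (simp_all add: pcompose_mult, metis pcompose_const pCons_one)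

context twisted_trace
begin

lemma fls_nth_stieltjes: "fls_nth (stieltjes T) (1 + int i) = T (gZ ^ i)"
proof -
  have "nat (1 + int i) = Suc i"
    by simp
  then show ?thesis
    by (simp add: stieltjes_def stieltjes_fps_def)
qed

lemma fls_nth_1_poly_at_inf_mult_stieltjes:
  "fls_nth (poly_at_inf q * stieltjes T) 1 = T (poly_z q)"
proof -
  have "fls_nth (poly_at_inf q * stieltjes T) 1 =
        (\<Sum>i\<le>degree q. coeff q i * fls_nth (fls_X_inv ^ i * stieltjes T) 1)"
    by (simp add: poly_at_inf_def sum_distrib_right fls_nth_sum mult.assoc)
  also have "\<dots> = (\<Sum>i\<le>degree q. coeff q i * T (gZ ^ i))"
    by (simp add: fls_X_inv_power_times_conv_shift fls_nth_stieltjes)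
  finally show ?thesis
    by (simp add: T_poly_z)
qed

lemma fls_nth_1_poly_at_inf_mult_translated_stieltjes:
  "fls_nth (poly_at_inf G * fls_compose_fps (stieltjes T) (translation_fps c)) 1 =
   T (poly_z (pcompose G [:-c, 1:]))"
proof -
  define W where "W = poly_at_inf (pcompose G [:-c, 1:])"
  have "fls_compose_fps W (translation_fps c) = fls_poly G (fls_poly [:-c, 1:] (fls_X_inv + fls_const c))"
    by (simp add: W_def fls_compose_poly_at_inf_translation_fps fls_poly_pcompose)
  also have "fls_poly [:-c, 1:] (fls_X_inv + fls_const c) = fls_X_inv"
    by (simp add: fls_poly_pCons fls_poly_const fls_plus_const[symmetric])
  finally have "fls_compose_fps W (translation_fps c) = poly_at_inf G"
    by (simp add: poly_at_inf_eq_fls_poly)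
  then have "poly_at_inf G * fls_compose_fps (stieltjes T) (translation_fps c) =
      fls_compose_fps (W * stieltjes T) (translation_fps c)"
    by (simp add: fls_compose_fps_mult)
  then show ?thesis
    by (simp add: fls_nth_1_compose_translation_fps fls_nth_1_poly_at_inf_mult_stieltjes W_def)
qed

lemma stieltjes_translation_equation:
  "\<exists>Q. poly_at_inf P * (fls_compose_fps (stieltjes T) (translation_fps (1/2))
      - fls_const t * fls_compose_fps (stieltjes T) (translation_fps (-(1/2)))) = poly_at_inf Q"
proof -
  define H where "H = poly_at_inf P * (fls_compose_fps (stieltjes T) (translation_fps (1/2))
      - fls_const t * fls_compose_fps (stieltjes T) (translation_fps (-(1/2))))"
  have coeff_H: "fls_nth H (1 + int k) = 0" for k
  proof -
    define G where "G = [:0, 1:] ^ k * P"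
    have "fls_nth H (1 + int k) = fls_nth (fls_X_inv ^ k * H) 1"
      by (simp add: fls_X_inv_power_times_conv_shift add.commute)
    also have "fls_X_inv ^ k * H =
        poly_at_inf G * fls_compose_fps (stieltjes T) (translation_fps (1/2))
        - fls_const t * (poly_at_inf G * fls_compose_fps (stieltjes T) (translation_fps (-(1/2))))"
      by (simp add: H_def G_def poly_at_inf_eq_fls_poly fls_poly_mult fls_poly_power fls_poly_pCons
          algebra_simps)
    also have "fls_nth \<dots> 1 =
        T (poly_z (pcompose G [:-(1/2), 1:])) - t * T (poly_z (pcompose G [:-(-(1/2)), 1:]))"
      by (simp add: fls_nth_1_poly_at_inf_mult_translated_stieltjes fls_minus_nth)
    also have "pcompose G [:-(1/2), 1:] = pcompose ([:1/2, 1:] ^ k) [:-1, 1:] * pcompose P [:-1/2, 1:]"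
      by (simp add: G_def pcompose_mult pcompose_power_left pcompose_pCons)
    also have "pcompose G [:-(-(1/2)), 1:] = pcompose P [:1/2, 1:] * [:1/2, 1:] ^ k"
      by (simp add: G_def pcompose_mult pcompose_power_left pcompose_pCons mult.commute)
    finally show ?thesis
      using T_poly_z_shift_relation[of "[:1/2, 1:] ^ k"] by simp
  qed
  have "fls_nth H n = 0" if "n > 0" for n
  proof -
    have "n = 1 + int (nat (n - 1))"
      using that by simp
    then show ?thesis
      using coeff_H by metis
  qed
  then show ?thesis
    unfolding H_def by (rule fls_eq_poly_at_inf_if_nth_pos_eq_0)
qed


lemma stieltjes_entire_multiple:
  assumes P: "P \<noteq> 0" and t: "t \<noteq> 0" and rad: "fps_conv_radius (stieltjes_fps T) > 0"
  obtains r D E where "r > 0" "ereal r < fps_conv_radius (stieltjes_fps T)" "D \<noteq> 0"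
    "E holomorphic_on UNIV"
    "\<And>y. norm y > 1/r \<Longrightarrow> E y = poly D y * eval_fps (stieltjes_fps T) (inverse y)"
proof -
  define f where "f = (\<lambda>y. eval_fps (stieltjes_fps T) (inverse y))"
  obtain Q K where FE: "\<And>x. norm x > K \<Longrightarrow> poly P x * (f (x + 1/2) - t * f (x - 1/2)) = poly Q x"
    using stieltjes_translation_equation eval_fps_translation_equation[OF rad]
    unfolding f_def stieltjes_def by metis
  obtain r where r: "0 < ereal r" "ereal r < fps_conv_radius (stieltjes_fps T)"
    using ereal_dense2[OF rad] by blast
  then have "r > 0"
    by simp
  have holo: "f holomorphic_on {y. norm y > 1/r}"
    unfolding f_def using r \<open>r > 0\<close> by (intro holomorphic_on_eval_fps_inverse) auto
  define A where "A = pcompose P [:-1/2, 1:]"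
  define B where "B = pcompose Q [:-1/2, 1:]"
  have FE_shifted: "poly A z * f z = t * poly A z * f (z - 1) + poly B z"
    if "norm z > max (1/r) (K + 1)" for z
  proof -
    have "norm z \<le> norm (z - 1/2) + 1/2"
      using norm_triangle_ineq[of "z - 1/2" "1/2"] by simp
    then have "poly P (z - 1/2) * (f z - t * f (z - 1)) = poly Q (z - 1/2)"
      using FE[of "z - 1/2"] that by (simp add: algebra_simps)
    then show ?thesis
      by (simp add: A_def B_def poly_pcompose algebra_simps)
  qed
  have "A \<noteq> 0"
    using P by (simp add: A_def pcompose_eq_0_iff)
  moreover have "0 \<le> 1/r"
    using \<open>r > 0\<close> by simp
  ultimately obtain D E where "D \<noteq> 0" "E holomorphic_on UNIV"
    "\<And>y. norm y > 1/r \<Longrightarrow> E y = poly D y * f y"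
    using functional_equation_entire_multiple[OF t _ _ max.cobounded1 holo FE_shifted] by blast
  then show ?thesis
    using that[OF \<open>r > 0\<close> r(2)] unfolding f_def by blast
qed

end

theorem lemma6p1:
  fixes P :: "complex poly" and t :: complex and T :: "fa \<Rightarrow> complex"
  assumes "Polynomial.degree P > 0" and "lead_coeff P = 1" and "t \<noteq> 0"
    and "T \<in> twisted_traces P t"
    and "\<not> is_rational_expansion_at_inf (stieltjes T)"
  shows "fps_conv_radius (stieltjes_fps T) = 0"
proof (rule ccontr)
  interpret twisted_trace P t T
    by unfold_locales (fact assms(4))
  assume "fps_conv_radius (stieltjes_fps T) \<noteq> 0"
  then have "fps_conv_radius (stieltjes_fps T) > 0"
    using conv_radius_nonneg[of "fps_nth (stieltjes_fps T)"] by (simp add: fps_conv_radius_def)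
  moreover have "P \<noteq> 0"
    using assms(1) by auto
  ultimately obtain r D E where "r > 0" "ereal r < fps_conv_radius (stieltjes_fps T)" "D \<noteq> 0"
    "E holomorphic_on UNIV"
    "\<And>y. norm y > 1/r \<Longrightarrow> E y = poly D y * eval_fps (stieltjes_fps T) (inverse y)"
    using stieltjes_entire_multiple[OF \<open>P \<noteq> 0\<close> assms(3)] by blast
  then have "is_rational_expansion_at_inf (stieltjes T)"
    unfolding stieltjes_def by (rule rational_expansion_if_entire_multiple)
  with assms(5) show False
    by simp
qed

end
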